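(* Let $R\in\operatorname{Ob}(\hat{\mathcal C})$, $n\ge2$, $G=\mathrm{SL}_n(R)$, $\bar\rho:G\to\mathrm{GL}_n(k)$ induced by reduction, $\iota:G\hookrightarrow\mathrm{GL}_n(R)$ the inclusion, and let $S\in\operatorname{Ob}(\hat{\mathcal C})$. (i) The map $\iota_*(S):\mathrm{Hom}_{\hat{\mathcal C}}(R,S)\to\mathrm{Def}_{\bar\rho}(S)$, $f\mapsto[\mathrm{GL}_n(f)\circ\iota]$, is injective. (ii) For $\xi\in\mathrm{Def}_{\bar\rho}(S)$, we have $\xi\in\operatorname{im}\iota_*(S)$ if and only if there is a lift $\rho\in\xi$ such that for every pair $a\ne b$ in $\{1,\dots,n\}$ and every $r\in R$ there exists $c^r_{ab}\in S$ with $\rho(t^r_{ab})=t^{c^r_{ab}}_{ab}$.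
   Context: Let $k$ be a finite field. $\hat{\mathcal C}$ is the category of complete noetherian local commutative rings with residue field $k$, with local homomorphisms inducing the identity on $k$; $\mathfrak m_S$ is the maximal ideal of $S$. For a profinite group $G$ and continuous $\bar\rho:G\to\mathrm{GL}_n(k)$, a lift to $S$ is a continuous $\rho:G\to\mathrm{GL}_n(S)$ reducing to $\bar\rho$; lifts are strictly equivalent if conjugate by an element of $I+M_n(\mathfrak m_S)$; $\mathrm{Def}_{\bar\rho}(S)$ is the set of strict equivalence classes $[\rho]$. $\mathrm{GL}_n(f)$ applies $f$ entrywise. For a commutative ring $A$, $r\in A$ and $a\ne b$, $e_{ab}$ is the matrix unit with $1$ in position $(a,b)$ and $t^r_{ab}=I+re_{ab}$. *)

theory Defs
  imports "HOL-Analysis.Analysis"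
begin

definition is_ideal :: "'r::comm_ring_1 set \<Rightarrow> bool" where
  "is_ideal I \<longleftrightarrow> 0 \<in> I \<and> (\<forall>x\<in>I. \<forall>y\<in>I. x + y \<in> I) \<and> (\<forall>r. \<forall>x\<in>I. r * x \<in> I)"

definition gen_ideal :: "'r::comm_ring_1 set \<Rightarrow> 'r set" where
  "gen_ideal X = \<Inter>{I. is_ideal I \<and> X \<subseteq> I}"

definition maxid :: "('r::comm_ring_1 \<Rightarrow> 'k::field) \<Rightarrow> 'r set" where
  "maxid \<pi> = {x. \<pi> x = 0}"

fun mpow :: "('r::comm_ring_1 \<Rightarrow> 'k::field) \<Rightarrow> nat \<Rightarrow> 'r set" where
  "mpow \<pi> 0 = UNIV"
| "mpow \<pi> (Suc i) = gen_ideal {a * b |a b. a \<in> maxid \<pi> \<and> b \<in> mpow \<pi> i}"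

definition is_ring_hom :: "('a::comm_ring_1 \<Rightarrow> 'b::comm_ring_1) \<Rightarrow> bool" where
  "is_ring_hom f \<longleftrightarrow> f 1 = 1 \<and> (\<forall>x y. f (x + y) = f x + f y) \<and> (\<forall>x y. f (x * y) = f x * f y)"

text \<open>An object of C-hat: a complete noetherian local ring together with an identification
  of its residue field with k, given by a surjective ring map pi onto k whose kernel is the
  unique maximal ideal.\<close>
definition cobj :: "('r::comm_ring_1 \<Rightarrow> 'k::{field,finite}) \<Rightarrow> bool" where
  "cobj \<pi> \<longleftrightarrow>
     is_ring_hom \<pi> \<and> surj \<pi> \<and>
     \<comment> \<open>local with maximal ideal ker pi: everything outside ker pi is a unit\<close>
     (\<forall>x. \<pi> x \<noteq> 0 \<longrightarrow> (\<exists>y. x * y = 1)) \<and>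
     \<comment> \<open>noetherian: every ideal is finitely generated\<close>
     (\<forall>I::'r set. is_ideal I \<longrightarrow> (\<exists>F. finite F \<and> I = gen_ideal F)) \<and>
     \<comment> \<open>m-adically separated\<close>
     (\<Inter>i. mpow \<pi> i) = {0} \<and>
     \<comment> \<open>m-adically complete\<close>
     (\<forall>x::nat \<Rightarrow> 'r. (\<forall>i. \<exists>N. \<forall>p\<ge>N. \<forall>q\<ge>N. x p - x q \<in> mpow \<pi> i) \<longrightarrow>
        (\<exists>L. \<forall>i. \<exists>N. \<forall>p\<ge>N. x p - L \<in> mpow \<pi> i))"

definition homC :: "('r::comm_ring_1 \<Rightarrow> 'k::{field,finite}) \<Rightarrow> ('s::comm_ring_1 \<Rightarrow> 'k)
    \<Rightarrow> ('r \<Rightarrow> 's) set" where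
  "homC \<pi>R \<pi>S = {f. is_ring_hom f \<and> (\<forall>x. x \<in> maxid \<pi>R \<longrightarrow> f x \<in> maxid \<pi>S) \<and>
                     (\<forall>x. \<pi>S (f x) = \<pi>R x)}"

definition matmap :: "('a \<Rightarrow> 'b) \<Rightarrow> 'a^'n^'n \<Rightarrow> 'b^'n^'n" where
  "matmap f A = (\<chi> i j. f (A $ i $ j))"

definition SL :: "('r::comm_ring_1^'n^'n) set" where
  "SL = {g. det g = 1}"

definition is_GL :: "'s::comm_ring_1^'n^'n \<Rightarrow> bool" where
  "is_GL A \<longleftrightarrow> (\<exists>B. A ** B = mat 1 \<and> B ** A = mat 1)"

definition elt :: "'a::comm_ring_1 \<Rightarrow> 'n \<Rightarrow> 'n \<Rightarrow> 'a^'n^'n" where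
  "elt r a b = mat 1 + (\<chi> i j. if i = a \<and> j = b then r else 0)"

definition matcong :: "('r::comm_ring_1 \<Rightarrow> 'k::field) \<Rightarrow> nat \<Rightarrow> 'r^'n^'n \<Rightarrow> 'r^'n^'n \<Rightarrow> bool" where
  "matcong \<pi> i A B \<longleftrightarrow> (\<forall>a b. A $ a $ b - B $ a $ b \<in> mpow \<pi> i)"

text \<open>A lift to S of the reduction representation of G = SL_n(R): a continuous group
  homomorphism G -> GL_n(S) (both with their m-adic topologies) reducing to rhobar.
  Only values on G matter.\<close>
definition is_lift :: "('r::comm_ring_1 \<Rightarrow> 'k::{field,finite}) \<Rightarrow> ('s::comm_ring_1 \<Rightarrow> 'k)
    \<Rightarrow> ('r^'n^'n \<Rightarrow> 's^'n^'n) \<Rightarrow> bool" where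
  "is_lift \<pi>R \<pi>S \<rho> \<longleftrightarrow>
     (\<forall>g\<in>SL. is_GL (\<rho> g)) \<and>
     (\<forall>g\<in>SL. \<forall>h\<in>SL. \<rho> (g ** h) = \<rho> g ** \<rho> h) \<and>
     (\<forall>g\<in>SL. \<forall>i. \<exists>j. \<forall>h\<in>SL. matcong \<pi>R j g h \<longrightarrow> matcong \<pi>S i (\<rho> g) (\<rho> h)) \<and>
     (\<forall>g\<in>SL. matmap \<pi>S (\<rho> g) = matmap \<pi>R g)"

definition strict_equiv :: "('s::comm_ring_1 \<Rightarrow> 'k::field)
    \<Rightarrow> ('r::comm_ring_1^'n^'n \<Rightarrow> 's^'n^'n) \<Rightarrow> ('r^'n^'n \<Rightarrow> 's^'n^'n) \<Rightarrow> bool" where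
  "strict_equiv \<pi>S \<rho> \<rho>' \<longleftrightarrow>
     (\<exists>P Q. P ** Q = mat 1 \<and> Q ** P = mat 1 \<and> (\<forall>a b. (P - mat 1) $ a $ b \<in> maxid \<pi>S) \<and>
            (\<forall>g\<in>SL. \<rho>' g = P ** \<rho> g ** Q))"

definition Def :: "('r::comm_ring_1 \<Rightarrow> 'k::{field,finite}) \<Rightarrow> ('s::comm_ring_1 \<Rightarrow> 'k)
    \<Rightarrow> ('r^'n^'n \<Rightarrow> 's^'n^'n) set set" where
  "Def \<pi>R \<pi>S = {\<rho>. is_lift \<pi>R \<pi>S \<rho>} // {(\<rho>, \<rho>'). strict_equiv \<pi>S \<rho> \<rho>'}"

definition iota_star :: "('r::comm_ring_1 \<Rightarrow> 'k::{field,finite}) \<Rightarrow> ('s::comm_ring_1 \<Rightarrow> 'k)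
    \<Rightarrow> ('r \<Rightarrow> 's) \<Rightarrow> ('r^'n^'n \<Rightarrow> 's^'n^'n) set" where
  "iota_star \<pi>R \<pi>S f = {\<rho>'. is_lift \<pi>R \<pi>S \<rho>' \<and> strict_equiv \<pi>S (\<lambda>g. matmap f g) \<rho>'}"

end

theory Submission
  imports Defs
begin

text \<open>
  If \<open>\<rho>\<close> sends every elementary matrix \<open>t\<^sup>r\<^sub>a\<^sub>b\<close> to some \<open>t\<^sup>c\<^sub>a\<^sub>b\<close>, the coefficients
  \<open>c = coef a b r\<close> are additive in \<open>r\<close>. The Steinberg relations involving the monomial matrices
  \<open>w\<^sub>a\<^sub>b(u) = t\<^sup>u\<^sub>a\<^sub>b t\<^sup>-\<^sup>u\<^sup>\<inverse>\<^sub>b\<^sub>a t\<^sup>u\<^sub>a\<^sub>b\<close> and \<open>h\<^sub>a\<^sub>b(u) = w\<^sub>a\<^sub>b(u) w\<^sub>a\<^sub>b(-1)\<close> show that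
  \<open>\<phi>(r) = coef a b r \<cdot> coef b a 1\<close> does not depend on \<open>a \<noteq> b\<close> and is multiplicative on units;
  since \<open>R\<close> is local, every element is a unit or a unit minus 1, so \<open>\<phi>\<close> is a ring homomorphism
  lifting the identity of \<open>k\<close>. The numbers \<open>coef a b 1\<close> form a multiplicative coboundary,
  so after conjugation by a diagonal matrix congruent to \<open>1\<close> modulo the maximal ideal of
  \<open>S\<close> the lift \<open>\<rho>\<close> agrees with \<open>GL\<^sub>n(\<phi>)\<close> on elementary matrices, hence on all of \<open>SL\<^sub>n(R)\<close>, which over a
  local ring is generated by them (Gaussian elimination).
  Injectivity: if \<open>GL\<^sub>n(g) = P GL\<^sub>n(f) Q\<close> on \<open>SL\<^sub>n(R)\<close> with \<open>PQ = 1\<close>, the \<open>(a, b)\<close> entry of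
  the image of \<open>t\<^sup>r\<^sub>a\<^sub>b\<close> gives \<open>g(r) = P\<^sub>a\<^sub>a f(r) Q\<^sub>b\<^sub>b\<close>, and \<open>r = 1\<close> shows \<open>P\<^sub>a\<^sub>a Q\<^sub>b\<^sub>b = 1\<close>.
\<close>

lemma is_ring_hom_add: "is_ring_hom f \<Longrightarrow> f (x + y) = f x + f y"
  unfolding is_ring_hom_def by blast

lemma is_ring_hom_mult: "is_ring_hom f \<Longrightarrow> f (x * y) = f x * f y"
  unfolding is_ring_hom_def by blast

lemma is_ring_hom_one: "is_ring_hom f \<Longrightarrow> f 1 = 1"
  unfolding is_ring_hom_def by blast

lemma is_ring_hom_zero: "is_ring_hom f \<Longrightarrow> f 0 = 0"
  using is_ring_hom_add[of f 0 0] by simp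

lemma is_ring_hom_uminus: "is_ring_hom f \<Longrightarrow> f (- x) = - f x"
  using is_ring_hom_add[of f x "- x"] is_ring_hom_zero[of f] by (simp add: minus_unique)

lemma is_ring_hom_diff: "is_ring_hom f \<Longrightarrow> f (x - y) = f x - f y"
  using is_ring_hom_add[of f x "- y"] is_ring_hom_uminus[of f y] by simp

lemma is_ring_hom_sum: "is_ring_hom f \<Longrightarrow> f (sum g A) = (\<Sum>x\<in>A. f (g x))"
  by (induction A rule: infinite_finite_induct) (auto simp: is_ring_hom_zero is_ring_hom_add)

lemma is_ring_hom_prod: "is_ring_hom f \<Longrightarrow> f (prod g A) = (\<Prod>x\<in>A. f (g x))"
  by (induction A rule: infinite_finite_induct) (auto simp: is_ring_hom_one is_ring_hom_mult)

lemma is_ring_hom_of_int: "is_ring_hom f \<Longrightarrow> f (of_int z) = of_int z"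
  by (induction z rule: int_induct[where k=0])
    (simp_all add: is_ring_hom_zero is_ring_hom_add is_ring_hom_diff is_ring_hom_one)

lemma is_ideal_gen_ideal: "is_ideal (gen_ideal X)"
  unfolding is_ideal_def gen_ideal_def by auto

lemma gen_ideal_subset: "X \<subseteq> gen_ideal X"
  unfolding gen_ideal_def by auto

lemma gen_ideal_least: "is_ideal I \<Longrightarrow> X \<subseteq> I \<Longrightarrow> gen_ideal X \<subseteq> I"
  unfolding gen_ideal_def by auto

lemma is_ideal_mpow: "is_ideal (mpow \<pi> i)"
  by (cases i) (simp add: is_ideal_def, simp add: is_ideal_gen_ideal)

lemma ideal_zero: "is_ideal I \<Longrightarrow> 0 \<in> I"
  unfolding is_ideal_def by blast

lemma ideal_add: "is_ideal I \<Longrightarrow> x \<in> I \<Longrightarrow> y \<in> I \<Longrightarrow> x + y \<in> I"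
  unfolding is_ideal_def by blast

lemma ideal_mult_left: "is_ideal I \<Longrightarrow> x \<in> I \<Longrightarrow> r * x \<in> I"
  unfolding is_ideal_def by blast

lemma ideal_mult_right: "is_ideal I \<Longrightarrow> x \<in> I \<Longrightarrow> x * r \<in> I"
  using ideal_mult_left[of I x r] by (simp add: mult.commute)

lemma ideal_sum: "is_ideal I \<Longrightarrow> (\<And>x. x \<in> A \<Longrightarrow> g x \<in> I) \<Longrightarrow> sum g A \<in> I"
  by (induction A rule: infinite_finite_induct) (auto simp: ideal_zero ideal_add)

lemma is_ideal_vimage: "is_ring_hom f \<Longrightarrow> is_ideal I \<Longrightarrow> is_ideal (f -` I)"
  unfolding is_ideal_def
  by (simp add: is_ring_hom_zero is_ring_hom_add is_ring_hom_mult)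

lemma ring_hom_image_mpow:
  assumes f: "is_ring_hom f" and local: "\<And>x. x \<in> maxid \<pi>R \<Longrightarrow> f x \<in> maxid \<pi>S"
  shows "f ` mpow \<pi>R i \<subseteq> mpow \<pi>S i"
proof (induction i)
  case (Suc i)
  let ?gens = "{a * b |a b. a \<in> maxid \<pi>S \<and> b \<in> mpow \<pi>S i}"
  have "mpow \<pi>R (Suc i) \<subseteq> f -` gen_ideal ?gens"
    unfolding mpow.simps
  proof (rule gen_ideal_least)
    show "is_ideal (f -` gen_ideal ?gens)"
      by (rule is_ideal_vimage[OF f is_ideal_gen_ideal])
    have "f (a * b) \<in> ?gens" if "a \<in> maxid \<pi>R" "b \<in> mpow \<pi>R i" for a b
      using that local Suc.IH unfolding is_ring_hom_mult[OF f] by blast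
    then show "{a * b |a b. a \<in> maxid \<pi>R \<and> b \<in> mpow \<pi>R i} \<subseteq> f -` gen_ideal ?gens"
      using gen_ideal_subset by blast
  qed
  then show ?case by auto
qed simp

lemma matcong_matmap:
  assumes "is_ring_hom f" and "\<And>x. x \<in> maxid \<pi>R \<Longrightarrow> f x \<in> maxid \<pi>S"
    and "matcong \<pi>R i A B"
  shows "matcong \<pi>S i (matmap f A) (matmap f B)"
  using assms ring_hom_image_mpow[OF assms(1,2), where i=i]
  by (fastforce simp: matcong_def matmap_def is_ring_hom_diff)

lemma matcong_mult:
  assumes "matcong \<pi> i A B"
  shows "matcong \<pi> i (M ** A ** N) (M ** B ** N)"
proof -
  have "(M ** A ** N) $ a $ b - (M ** B ** N) $ a $ b
      = (\<Sum>k\<in>UNIV. (\<Sum>l\<in>UNIV. M $ a $ l * (A $ l $ k - B $ l $ k)) * N $ k $ b)" for a b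
    by (simp add: matrix_matrix_mult_def sum_subtractf algebra_simps sum_distrib_right)
  moreover have "(\<Sum>k\<in>UNIV. (\<Sum>l\<in>UNIV. M $ a $ l * (A $ l $ k - B $ l $ k)) * N $ k $ b) \<in> mpow \<pi> i"
    for a b
    using assms is_ideal_mpow
    by (intro ideal_sum ideal_mult_right ideal_mult_left) (auto simp: matcong_def)
  ultimately show ?thesis
    unfolding matcong_def by simp
qed

lemma elt_nth: "elt r a b $ i $ j = (if i = j then 1 else 0) + (if i = a \<and> j = b then r else 0)"
  by (simp add: elt_def mat_def)

lemma mult_elt_nth:
  "((M::'a::comm_ring_1^'n^'n) ** elt r a b) $ i $ j = M $ i $ j + (if j = b then M $ i $ a * r else 0)"
proof -
  have "(M ** elt r a b) $ i $ j
      = (\<Sum>k\<in>UNIV. (if k = j then M $ i $ k else 0) + (if k = a then (if j = b then M $ i $ k * r else 0) else 0))"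
    unfolding matrix_matrix_mult_def elt_nth by (auto intro!: sum.cong simp: algebra_simps)
  then show ?thesis
    by (simp only: sum.distrib sum.delta if_True UNIV_I) simp
qed

lemma elt_mult_nth:
  "(elt r a b ** (M::'a::comm_ring_1^'n^'n)) $ i $ j = M $ i $ j + (if i = a then r * M $ b $ j else 0)"
proof -
  have "(elt r a b ** M) $ i $ j
      = (\<Sum>k\<in>UNIV. (if k = i then M $ k $ j else 0) + (if k = b then (if i = a then r * M $ k $ j else 0) else 0))"
    unfolding matrix_matrix_mult_def elt_nth by (auto intro!: sum.cong simp: algebra_simps)
  then show ?thesis
    by (simp only: sum.distrib sum.delta' if_True UNIV_I) simp
qed

lemma mult_elt_mult_nth:
  "((P::'a::comm_ring_1^'n^'n) ** elt r a b ** Q) $ i $ j = (P ** Q) $ i $ j + P $ i $ a * r * Q $ b $ j"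
proof -
  have "(P ** elt r a b ** Q) $ i $ j
      = (\<Sum>l\<in>UNIV. P $ i $ l * Q $ l $ j + (if l = b then P $ i $ a * r * Q $ l $ j else 0))"
    unfolding matrix_matrix_mult_def[of "P ** elt r a b" Q]
    by (auto simp: mult_elt_nth algebra_simps intro!: sum.cong)
  then show ?thesis
    by (simp add: sum.distrib matrix_matrix_mult_def)
qed

lemma elt_zero: "elt 0 a b = mat 1"
  by (simp add: vec_eq_iff elt_nth mat_def)

lemma elt_mult_elt: "a \<noteq> b \<Longrightarrow> elt r a b ** elt s a b = (elt (r + s) a b :: 'a::comm_ring_1^'n^'n)"
  by (auto simp: vec_eq_iff mult_elt_nth elt_nth algebra_simps)

lemma elt_eq_elt_iff:
  assumes "a \<noteq> b" shows "elt r a b = elt s a b \<longleftrightarrow> r = s"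
proof
  assume "elt r a b = elt s a b"
  then have "elt r a b $ a $ b = elt s a b $ a $ b" by simp
  with assms show "r = s" by (simp add: elt_nth)
qed simp

lemma det_elt:
  assumes "a \<noteq> b" shows "det (elt r a b :: 'a::comm_ring_1^'n^'n) = 1"
proof -
  have "elt r a b = (\<chi> k. if k = a then row a (mat 1) + r *s row b (mat 1) else row k (mat 1 :: 'a^'n^'n))"
    using assms by (auto simp: vec_eq_iff elt_nth row_def mat_def)
  then show ?thesis
    using det_row_operation[OF assms, of "mat 1" r] by simp
qed

lemma matmap_nth [simp]: "matmap f A $ i $ j = f (A $ i $ j)"
  by (simp add: matmap_def)

lemma matmap_mult: "is_ring_hom f \<Longrightarrow> matmap f (A ** B) = matmap f A ** matmap f B"
  by (simp add: vec_eq_iff matrix_matrix_mult_def is_ring_hom_sum is_ring_hom_mult)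

lemma matmap_mat_1: "is_ring_hom f \<Longrightarrow> matmap f (mat 1) = mat 1"
  by (simp add: vec_eq_iff mat_def is_ring_hom_zero is_ring_hom_one)

lemma matmap_elt: "is_ring_hom f \<Longrightarrow> matmap f (elt r a b) = elt (f r) a b"
  by (simp add: vec_eq_iff elt_nth is_ring_hom_zero is_ring_hom_one is_ring_hom_add)

lemma det_matmap: "is_ring_hom f \<Longrightarrow> det (matmap f A) = f (det A)"
  by (simp add: det_def is_ring_hom_sum is_ring_hom_mult is_ring_hom_prod is_ring_hom_of_int)

definition diag_mat :: "('n \<Rightarrow> 'a::comm_ring_1) \<Rightarrow> 'a^'n^'n" where
  "diag_mat d = (\<chi> i j. if i = j then d i else 0)"

lemma diag_mat_nth: "diag_mat d $ i $ j = (if i = j then d i else 0)"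
  by (simp add: diag_mat_def)

lemma diag_mat_mult_nth: "(diag_mat d ** M) $ i $ j = d i * M $ i $ j"
  by (simp add: matrix_matrix_mult_def diag_mat_def if_distrib[of "\<lambda>x. x * _"] cong: if_cong)

lemma mult_diag_mat_nth: "(M ** diag_mat d) $ i $ j = M $ i $ j * d j"
  by (simp add: matrix_matrix_mult_def diag_mat_def if_distrib[of "\<lambda>x. _ * x"] cong: if_cong)

lemma diag_mat_mult_diag_mat: "diag_mat d ** diag_mat d' = diag_mat (\<lambda>i. d i * d' i)"
  by (simp add: vec_eq_iff diag_mat_mult_nth diag_mat_nth)

lemma diag_mat_mult_inverse:
  "(\<And>i. d i * d' i = 1) \<Longrightarrow> diag_mat d ** diag_mat d' = mat 1"
  unfolding diag_mat_mult_diag_mat by (simp add: diag_mat_def mat_def)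

inductive_set elementary :: "('a::comm_ring_1^'n^'n) set" where
  mat_1: "mat 1 \<in> elementary"
| elt_mult: "a \<noteq> b \<Longrightarrow> A \<in> elementary \<Longrightarrow> elt r a b ** A \<in> elementary"

lemma elementary_mult: "A \<in> elementary \<Longrightarrow> B \<in> elementary \<Longrightarrow> A ** B \<in> elementary"
  by (induction A rule: elementary.induct)
    (auto simp: matrix_mul_assoc[symmetric] intro: elementary.intros)

lemma elt_in_elementary: "a \<noteq> b \<Longrightarrow> elt r a b \<in> elementary"
  using elementary.elt_mult[OF _ elementary.mat_1] by fastforce

lemma elementary_invertible: "A \<in> elementary \<Longrightarrow> \<exists>B\<in>elementary. A ** B = mat 1 \<and> B ** A = mat 1"
proof (induction A rule: elementary.induct)
  case mat_1
  then show ?case using elementary.mat_1 by force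
next
  case (elt_mult a b A r)
  then obtain B where B: "B \<in> elementary" "A ** B = mat 1" "B ** A = mat 1" by blast
  have "elt r a b ** elt (-r) a b = mat 1" "elt (-r) a b ** elt r a b = mat 1"
    using elt_mult(1) by (simp_all add: elt_mult_elt elt_zero)
  then have "elt r a b ** A ** (B ** elt (-r) a b) = mat 1"
      "B ** elt (-r) a b ** (elt r a b ** A) = mat 1"
    using B by (metis matrix_mul_assoc matrix_mul_rid)+
  moreover have "B ** elt (-r) a b \<in> elementary"
    using B(1) elt_in_elementary[OF elt_mult(1)] by (rule elementary_mult)
  ultimately show ?case by blast
qed

lemma elementary_in_SL: "A \<in> elementary \<Longrightarrow> A \<in> SL"
  by (induction A rule: elementary.induct) (auto simp: SL_def det_mul det_elt)

lemma SL_mult: "g \<in> SL \<Longrightarrow> h \<in> SL \<Longrightarrow> g ** h \<in> SL"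
  by (simp add: SL_def det_mul)

lemma elt_in_SL: "a \<noteq> b \<Longrightarrow> elt r a b \<in> SL"
  by (simp add: SL_def det_elt)

definition wmat :: "'a::comm_ring_1 \<Rightarrow> 'a \<Rightarrow> 'n \<Rightarrow> 'n \<Rightarrow> 'a^'n^'n" where
  "wmat u v a b = elt u a b ** elt (- v) b a ** elt u a b"

definition hmat :: "'a::comm_ring_1 \<Rightarrow> 'a \<Rightarrow> 'n \<Rightarrow> 'n \<Rightarrow> 'a^'n^'n" where
  "hmat u v a b = diag_mat (\<lambda>x. if x = a then u else if x = b then v else 1)"

lemma wmat_nth:
  assumes "a \<noteq> b" "u * v = 1"
  shows "wmat u v a b $ x $ y = (if x = a \<and> y = b then u else if x = b \<and> y = a then - v else
            if x = a \<or> x = b then 0 else if x = y then 1 else 0)"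
  using assms unfolding wmat_def by (auto simp: mult_elt_nth elt_nth algebra_simps)

lemma wmat_in_elementary: "a \<noteq> b \<Longrightarrow> wmat u v a b \<in> elementary"
  unfolding wmat_def by (intro elementary_mult elt_in_elementary) auto

lemma wmat_mult_wmat:
  assumes "a \<noteq> b" "u * u' = 1" "v * v' = 1"
  shows "wmat u u' a b ** wmat (- v) (- v') a b = hmat (u * v') (u' * v) a b"
proof -
  have v: "v * (v' * z) = z" for z using assms(3) by (simp add: mult.assoc[symmetric])
  have "wmat u u' a b ** wmat (- v) (- v') a b
      = wmat u u' a b ** elt (- v) a b ** elt v' b a ** elt (- v) a b"
    unfolding wmat_def by (simp add: matrix_mul_assoc)
  also have "\<dots> = hmat (u * v') (u' * v) a b"
    using assms by (auto simp: vec_eq_iff mult_elt_nth wmat_nth hmat_def diag_mat_nth algebra_simps v)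
  finally show ?thesis .
qed

lemma hmat_in_elementary:
  assumes "a \<noteq> b" "u * u' = 1" shows "hmat u u' a b \<in> elementary"
  using wmat_mult_wmat[OF assms, of 1 1] elementary_mult[OF wmat_in_elementary wmat_in_elementary]
  by (metis assms(1) mult_1_right)

lemma hmat_mult_hmat: "hmat u u' a b ** hmat v v' a b = hmat (u * v) (u' * v') a b"
  unfolding hmat_def diag_mat_mult_diag_mat by (rule arg_cong[where f = diag_mat]) auto

lemma wmat_conj_elt_transpose:
  assumes "a \<noteq> b" "u * u' = 1"
  shows "wmat u u' a b ** elt 1 b a = elt (- (u * u)) a b ** wmat u u' a b"
proof -
  have "u * (u * u') = u" using assms(2) by simp
  then show ?thesis
    using assms by (auto simp: vec_eq_iff mult_elt_nth elt_mult_nth wmat_nth) (simp add: algebra_simps)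
qed

lemma wmat_conj_elt_left:
  assumes "a \<noteq> b" "k \<noteq> a" "k \<noteq> b"
  shows "wmat 1 1 a b ** elt r b k = elt r a k ** wmat 1 1 a b"
  using assms by (auto simp: vec_eq_iff mult_elt_nth elt_mult_nth wmat_nth)

lemma wmat_conj_elt_right:
  assumes "a \<noteq> b" "k \<noteq> a" "k \<noteq> b"
  shows "wmat 1 1 a b ** elt r k a = elt (- r) k b ** wmat 1 1 a b"
  using assms by (auto simp: vec_eq_iff mult_elt_nth elt_mult_nth wmat_nth)

section \<open>Elementary matrices generate \<open>SL\<^sub>n\<close> over a local ring\<close>

definition identity_on :: "'n set \<Rightarrow> 'a::comm_ring_1^'n^'n \<Rightarrow> bool" where
  "identity_on K A \<longleftrightarrow>
     (\<forall>k\<in>K. \<forall>j. A $ k $ j = (if k = j then 1 else 0) \<and> A $ j $ k = (if k = j then 1 else 0))"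

lemma identity_on_det_eq_1:
  fixes A :: "'a::comm_ring_1^'n^'n"
  assumes K: "identity_on K A" and card: "card (- K) \<le> 1" and det: "det A = 1"
  shows "A = mat 1"
proof -
  have small: "x = y" if "x \<notin> K" "y \<notin> K" for x y
    using card card_le_Suc0_iff_eq[of "- K"] that by auto
  have off: "A $ x $ y = 0" if "x \<noteq> y" for x y
    using K small that unfolding identity_on_def by (metis (full_types))
  have diag_K: "A $ y $ y = 1" if "y \<in> K" for y
    using K that unfolding identity_on_def by auto
  have "A $ x $ x = 1" for x
  proof (cases "x \<in> K")
    case False
    have "(\<Prod>y\<in>UNIV - {x}. A $ y $ y) = 1"
      using diag_K small False by (intro prod.neutral) blast
    then have "det A = A $ x $ x"
      by (simp add: det_diagonal[OF off] prod.remove[of UNIV x])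
    then show ?thesis using det by simp
  qed (rule diag_K)
  then show ?thesis
    using off by (auto simp: vec_eq_iff mat_def)
qed

lemma clear_column:
  fixes B :: "'a::comm_ring_1^'n^'n"
  assumes K: "identity_on K B" and i: "i \<notin> K" and v: "B $ i $ i * v = 1"
    and J: "finite J" "J \<subseteq> - K - {i}"
  shows "\<exists>L\<in>elementary. identity_on K (L ** B) \<and> (\<forall>l. (L ** B) $ i $ l = B $ i $ l) \<and>
           (\<forall>j\<in>J. (L ** B) $ j $ i = 0)"
  using J
proof (induction J rule: finite_induct)
  case empty
  then show ?case using K elementary.mat_1 by force
next
  case (insert j J)
  then obtain L where L: "L \<in> elementary" "identity_on K (L ** B)" "\<forall>l. (L ** B) $ i $ l = B $ i $ l"
      "\<forall>j\<in>J. (L ** B) $ j $ i = 0"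
    by blast
  define C where "C = L ** B"
  have j: "j \<noteq> i" "j \<notin> K" using insert by auto
  define L' where "L' = elt (- (C $ j $ i * v)) j i ** L"
  have L'B: "L' ** B = elt (- (C $ j $ i * v)) j i ** C"
    unfolding L'_def C_def by (simp add: matrix_mul_assoc)
  have Ci: "C $ i $ l = B $ i $ l" for l using L C_def by simp
  show ?case
  proof (intro bexI conjI ballI allI)
    show "L' \<in> elementary" unfolding L'_def using j L by (auto intro: elementary.intros)
    show "identity_on K (L' ** B)" unfolding L'B
      using L(2) j i Ci K by (auto simp: identity_on_def elt_mult_nth C_def)
    show "(L' ** B) $ i $ l = B $ i $ l" for l unfolding L'B using j Ci by (simp add: elt_mult_nth)
  next
    fix j' assume "j' \<in> insert j J"
    then show "(L' ** B) $ j' $ i = 0" unfolding L'B using j Ci v L(4) C_def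
      by (auto simp: elt_mult_nth algebra_simps) (metis mult.assoc mult.commute mult_1)
  qed
qed

lemma clear_row:
  fixes C :: "'a::comm_ring_1^'n^'n"
  assumes K: "identity_on K C" and i: "i \<notin> K" and v: "C $ i $ i * v = 1"
    and c: "\<forall>x. x \<noteq> i \<longrightarrow> C $ x $ i = 0" and J: "finite J" "J \<subseteq> - K - {i}"
  shows "\<exists>M\<in>elementary. identity_on K (C ** M) \<and> (\<forall>x. (C ** M) $ x $ i = C $ x $ i) \<and>
           (\<forall>j\<in>J. (C ** M) $ i $ j = 0)"
  using J
proof (induction J rule: finite_induct)
  case empty
  then show ?case using K elementary.mat_1 by force
next
  case (insert j J)
  then obtain M where M: "M \<in> elementary" "identity_on K (C ** M)" "\<forall>x. (C ** M) $ x $ i = C $ x $ i"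
      "\<forall>j\<in>J. (C ** M) $ i $ j = 0"
    by blast
  define D where "D = C ** M"
  have j: "j \<noteq> i" "j \<notin> K" using insert by auto
  define M' where "M' = M ** elt (- (D $ i $ j * v)) i j"
  have CM: "C ** M' = D ** elt (- (D $ i $ j * v)) i j"
    unfolding M'_def D_def by (simp add: matrix_mul_assoc)
  have Di: "D $ x $ i = C $ x $ i" for x using M D_def by simp
  show ?case
  proof (intro bexI conjI ballI allI)
    show "M' \<in> elementary" unfolding M'_def using j M by (auto intro: elementary_mult elt_in_elementary)
    show "identity_on K (C ** M')" unfolding CM
      using M(2) j i Di K c by (auto simp: identity_on_def mult_elt_nth D_def)
    show "(C ** M') $ x $ i = C $ x $ i" for x unfolding CM using j Di by (simp add: mult_elt_nth)
  next
    fix j' assume "j' \<in> insert j J"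
    then show "(C ** M') $ i $ j' = 0" unfolding CM using j Di v M(4) D_def
      by (auto simp: mult_elt_nth algebra_simps) (metis mult.assoc mult.commute mult_1)
  qed
qed

lemma clear_row_column:
  fixes B :: "'a::comm_ring_1^'n^'n"
  assumes K: "identity_on K B" and i: "i \<notin> K" and v: "B $ i $ i * v = 1"
  obtains X M where "X \<in> elementary" "M \<in> elementary" "identity_on K (X ** B ** M)"
    "(X ** B ** M) $ i $ i = B $ i $ i"
    "\<And>y. y \<noteq> i \<Longrightarrow> (X ** B ** M) $ i $ y = 0" "\<And>x. x \<noteq> i \<Longrightarrow> (X ** B ** M) $ x $ i = 0"
proof -
  obtain X where X: "X \<in> elementary" "identity_on K (X ** B)" "\<forall>l. (X ** B) $ i $ l = B $ i $ l"
      "\<forall>j\<in>- K - {i}. (X ** B) $ j $ i = 0"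
    using clear_column[OF K i v, of "- K - {i}"] by auto
  define C where "C = X ** B"
  have col: "\<forall>x. x \<noteq> i \<longrightarrow> C $ x $ i = 0"
    using X(2,4) i unfolding C_def identity_on_def by (metis Compl_iff insert_Diff insert_iff)
  have Cv: "C $ i $ i * v = 1" using X(3) v C_def by simp
  obtain M where M: "M \<in> elementary" "identity_on K (C ** M)" "\<forall>x. (C ** M) $ x $ i = C $ x $ i"
      "\<forall>j\<in>- K - {i}. (C ** M) $ i $ j = 0"
    using clear_row[OF _ i Cv col, of "- K - {i}"] X(2) C_def by auto
  have "(C ** M) $ i $ y = 0" if "y \<noteq> i" for y
    using M(2,4) i that unfolding identity_on_def by (metis Compl_iff insert_Diff insert_iff)
  then show ?thesis
    using that[OF X(1) M(1)] M(2,3) col X(3) unfolding C_def by auto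
qed

lemma elementary_cancel:
  assumes X: "X \<in> elementary" and M: "M \<in> elementary" and XAM: "X ** A ** M \<in> elementary"
  shows "A \<in> elementary"
proof -
  obtain X' where X': "X' \<in> elementary" "X' ** X = mat 1" using elementary_invertible[OF X] by blast
  obtain M' where M': "M' \<in> elementary" "M ** M' = mat 1" using elementary_invertible[OF M] by blast
  have "A = (X' ** X) ** A ** (M ** M')"
    using X'(2) M'(2) by simp
  also have "\<dots> = X' ** (X ** A ** M) ** M'"
    by (simp add: matrix_mul_assoc)
  also have "\<dots> \<in> elementary"
    by (intro elementary_mult X'(1) M'(1) XAM)
  finally show ?thesis .
qed

locale local_ring =
  fixes \<pi> :: "'r::comm_ring_1 \<Rightarrow> 'k::field"
  assumes hom: "is_ring_hom \<pi>"
    and unit: "\<And>x. \<pi> x \<noteq> 0 \<Longrightarrow> \<exists>y. x * y = 1"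
begin

lemma additive_eq_if_eq_on_units:
  fixes \<phi> \<psi> :: "'r \<Rightarrow> 'a::ab_group_add"
  assumes "\<And>x y. \<phi> (x + y) = \<phi> x + \<phi> y" and "\<And>x y. \<psi> (x + y) = \<psi> x + \<psi> y"
    and units: "\<And>u u'. u * u' = 1 \<Longrightarrow> \<phi> u = \<psi> u"
  shows "\<phi> x = \<psi> x"
proof (cases "\<pi> x = 0")
  case False
  then show ?thesis using unit units by blast
next
  case True
  then have "\<pi> (x + 1) \<noteq> 0" by (simp add: is_ring_hom_add[OF hom] is_ring_hom_one[OF hom])
  then have "\<phi> (x + 1) = \<psi> (x + 1)" using unit units by blast
  moreover have "\<phi> 1 = \<psi> 1" using units[of 1 1] by simp
  ultimately show ?thesis using assms(1,2) by simp
qed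

lemma column_has_unit:
  fixes A :: "'r^'n^'n"
  assumes det: "det A = 1" and K: "identity_on K A" and i: "i \<notin> K"
  shows "\<exists>j. j \<notin> K \<and> \<pi> (A $ j $ i) \<noteq> 0"
proof (rule ccontr)
  assume "\<nexists>j. j \<notin> K \<and> \<pi> (A $ j $ i) \<noteq> 0"
  then have "\<pi> (A $ j $ i) = 0" for j
    using K i is_ring_hom_zero[OF hom] unfolding identity_on_def by (cases "j \<in> K") auto
  then have "det (matmap \<pi> A) = 0"
    by (intro det_zero_column(2)[of i]) (simp add: column_def vec_eq_iff)
  moreover have "det (matmap \<pi> A) = 1"
    using det by (simp add: det_matmap[OF hom] is_ring_hom_one[OF hom])
  ultimately show False by simp
qed

lemma unit_pivot:
  fixes A :: "'r^'n^'n"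
  assumes det: "det A = 1" and K: "identity_on K A" and i: "i \<notin> K"
  obtains L v where "L \<in> elementary" "identity_on K (L ** A)" "(L ** A) $ i $ i * v = 1"
proof -
  obtain j where j: "j \<notin> K" "\<pi> (A $ j $ i) \<noteq> 0" using column_has_unit[OF det K i] by blast
  have "\<exists>L\<in>elementary. identity_on K (L ** A) \<and> \<pi> ((L ** A) $ i $ i) \<noteq> 0"
  proof (cases "\<pi> (A $ i $ i) = 0")
    case False
    then show ?thesis using K elementary.mat_1 by force
  next
    case True
    then have "j \<noteq> i" using j by auto
    then have "elt 1 i j \<in> elementary" "identity_on K (elt 1 i j ** A)"
        "\<pi> ((elt 1 i j ** A) $ i $ i) \<noteq> 0"
      using K i j True by (auto simp: elt_in_elementary identity_on_def elt_mult_nth is_ring_hom_add[OF hom])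
    then show ?thesis by blast
  qed
  then show ?thesis using unit that by blast
qed

text \<open>The inverse of the pivot is moved into row \<open>j\<close> by the elementary matrix \<open>hmat\<close>;
  this is why a second index outside \<open>K\<close> is needed.\<close>

lemma eliminate_index:
  fixes A :: "'r^'n^'n"
  assumes K: "identity_on K A" and det: "det A = 1" and i: "i \<notin> K" and j: "j \<notin> K" "j \<noteq> i"
  obtains X M where "X \<in> elementary" "M \<in> elementary" "identity_on (insert i K) (X ** A ** M)"
proof -
  obtain L v where L: "L \<in> elementary" "identity_on K (L ** A)" "(L ** A) $ i $ i * v = 1"
    using unit_pivot[OF det K i] by blast
  obtain X M where XM: "X \<in> elementary" "M \<in> elementary" "identity_on K (X ** (L ** A) ** M)"
      "(X ** (L ** A) ** M) $ i $ i = (L ** A) $ i $ i"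
      "\<And>y. y \<noteq> i \<Longrightarrow> (X ** (L ** A) ** M) $ i $ y = 0"
      "\<And>x. x \<noteq> i \<Longrightarrow> (X ** (L ** A) ** M) $ x $ i = 0"
    using clear_row_column[OF L(2) i L(3)] by blast
  define D where "D = X ** (L ** A) ** M"
  have D: "identity_on K D" "D $ i $ i * v = 1" "\<And>y. y \<noteq> i \<Longrightarrow> D $ i $ y = 0"
      "\<And>x. x \<noteq> i \<Longrightarrow> D $ x $ i = 0"
    using XM(3-6) L(3) unfolding D_def by auto
  define H where "H = hmat v (D $ i $ i) i j"
  have H: "H \<in> elementary"
    unfolding H_def using hmat_in_elementary[OF j(2)[symmetric]] D(2) by (simp add: mult.commute)
  have HD: "(H ** D) $ x $ y = (if x = i then v else if x = j then D $ i $ i else 1) * D $ x $ y" for x y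
    unfolding H_def hmat_def diag_mat_mult_nth using j by simp
  have "identity_on (insert i K) (H ** D)"
    using D j unfolding identity_on_def by (auto simp: HD mult.commute)
  moreover have "H ** D = (H ** X ** L) ** A ** M"
    unfolding D_def by (simp add: matrix_mul_assoc)
  moreover have "H ** X ** L \<in> elementary"
    using H XM(1) L(1) by (intro elementary_mult)
  ultimately show ?thesis using that XM(2) by metis
qed

lemma identity_on_elementary:
  fixes A :: "'r^'n^'n"
  shows "identity_on K A \<Longrightarrow> det A = 1 \<Longrightarrow> A \<in> elementary"
proof (induction "card (- K)" arbitrary: K A rule: less_induct)
  case less
  show ?case
  proof (cases "card (- K) \<le> 1")
    case True
    then show ?thesis using identity_on_det_eq_1[OF less.prems(1) _ less.prems(2)] elementary.mat_1 by simp
  next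
    case False
    then obtain i j where ij: "i \<notin> K" "j \<notin> K" "j \<noteq> i"
      using card_le_Suc0_iff_eq[of "- K"] by auto
    obtain X M where XM: "X \<in> elementary" "M \<in> elementary" "identity_on (insert i K) (X ** A ** M)"
      using eliminate_index[OF less.prems ij] by blast
    have "det X = 1" "det M = 1"
      using XM(1,2) elementary_in_SL by (auto simp: SL_def)
    then have "det (X ** A ** M) = 1"
      using less.prems(2) by (simp add: det_mul)
    moreover have "card (- insert i K) < card (- K)"
      using ij(1) by (metis Compl_iff Compl_insert card_Diff1_less finite)
    ultimately have "X ** A ** M \<in> elementary"
      using less.hyps XM(3) by blast
    then show ?thesis using elementary_cancel XM(1,2) by blast
  qed
qed

lemma SL_eq_elementary: "(SL :: ('r^'n::finite^'n) set) = elementary"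
  using identity_on_elementary[of "{}"] elementary_in_SL unfolding SL_def identity_on_def by blast

end

lemma cobj_local_ring: "cobj \<pi> \<Longrightarrow> local_ring \<pi>"
  unfolding local_ring_def cobj_def by (elim conjE) blast

lemma matmap_eq_mat_1_iff:
  "is_ring_hom \<pi> \<Longrightarrow> matmap \<pi> P = mat 1 \<longleftrightarrow> (\<forall>a b. (P - mat 1) $ a $ b \<in> maxid \<pi>)"
  by (auto simp: maxid_def vec_eq_iff mat_def is_ring_hom_diff is_ring_hom_zero is_ring_hom_one
      split: if_splits)

lemma strict_equiv_iff:
  "is_ring_hom \<pi>S \<Longrightarrow> strict_equiv \<pi>S \<rho> \<rho>' \<longleftrightarrow>
     (\<exists>P Q. P ** Q = mat 1 \<and> Q ** P = mat 1 \<and> matmap \<pi>S P = mat 1 \<and> (\<forall>g\<in>SL. \<rho>' g = P ** \<rho> g ** Q))"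
  unfolding strict_equiv_def by (simp add: matmap_eq_mat_1_iff)

lemma matmap_inverse_eq_mat_1:
  "is_ring_hom \<pi> \<Longrightarrow> P ** Q = mat 1 \<Longrightarrow> matmap \<pi> P = mat 1 \<Longrightarrow> matmap \<pi> Q = mat 1"
  by (metis matmap_mult matmap_mat_1 matrix_mul_lid)

lemma strict_equiv_refl: "is_ring_hom \<pi>S \<Longrightarrow> strict_equiv \<pi>S \<rho> \<rho>"
  unfolding strict_equiv_iff by (intro exI[of _ "mat 1"]) (simp add: matmap_mat_1)

lemma strict_equiv_sym:
  assumes hom: "is_ring_hom \<pi>S" and "strict_equiv \<pi>S \<rho> \<rho>'"
  shows "strict_equiv \<pi>S \<rho>' \<rho>"
proof -
  obtain P Q where PQ: "P ** Q = mat 1" "Q ** P = mat 1" "matmap \<pi>S P = mat 1"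
      "\<forall>g\<in>SL. \<rho>' g = P ** \<rho> g ** Q"
    using assms strict_equiv_iff[OF hom] by blast
  have "\<rho> g = Q ** \<rho>' g ** P" if "g \<in> SL" for g
  proof -
    have "Q ** \<rho>' g ** P = (Q ** P) ** \<rho> g ** (Q ** P)"
      using PQ(4) that by (simp add: matrix_mul_assoc)
    then show ?thesis using PQ(2) by simp
  qed
  then show ?thesis
    unfolding strict_equiv_iff[OF hom] using PQ matmap_inverse_eq_mat_1[OF hom PQ(1,3)] by blast
qed

lemma strict_equiv_trans:
  assumes hom: "is_ring_hom \<pi>S" and "strict_equiv \<pi>S \<rho> \<rho>'" and "strict_equiv \<pi>S \<rho>' \<rho>''"
  shows "strict_equiv \<pi>S \<rho> \<rho>''"
proof -
  obtain P Q where PQ: "P ** Q = mat 1" "Q ** P = mat 1" "matmap \<pi>S P = mat 1"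
      "\<forall>g\<in>SL. \<rho>' g = P ** \<rho> g ** Q"
    using assms strict_equiv_iff[OF hom] by blast
  obtain P' Q' where PQ': "P' ** Q' = mat 1" "Q' ** P' = mat 1" "matmap \<pi>S P' = mat 1"
      "\<forall>g\<in>SL. \<rho>'' g = P' ** \<rho>' g ** Q'"
    using assms strict_equiv_iff[OF hom] by blast
  have "(P' ** P) ** (Q ** Q') = mat 1"
    by (metis PQ(1) PQ'(1) matrix_mul_assoc matrix_mul_rid)
  moreover have "(Q ** Q') ** (P' ** P) = mat 1"
    by (metis PQ(2) PQ'(2) matrix_mul_assoc matrix_mul_rid)
  moreover have "matmap \<pi>S (P' ** P) = mat 1"
    using PQ(3) PQ'(3) by (simp add: matmap_mult[OF hom])
  moreover have "\<forall>g\<in>SL. \<rho>'' g = (P' ** P) ** \<rho> g ** (Q ** Q')"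
    using PQ(4) PQ'(4) by (simp add: matrix_mul_assoc)
  ultimately show ?thesis
    unfolding strict_equiv_iff[OF hom] by blast
qed

lemma is_lift_strict_equiv:
  fixes \<rho> \<rho>' :: "'r::comm_ring_1^'n^'n \<Rightarrow> 's::comm_ring_1^'n^'n"
  assumes hom: "is_ring_hom \<pi>S" and lift: "is_lift \<pi>R \<pi>S \<rho>" and "strict_equiv \<pi>S \<rho> \<rho>'"
  shows "is_lift \<pi>R \<pi>S \<rho>'"
proof -
  obtain P Q where PQ: "P ** Q = mat 1" "Q ** P = mat 1" "matmap \<pi>S P = mat 1"
      "\<forall>g\<in>SL. \<rho>' g = P ** \<rho> g ** Q"
    using assms strict_equiv_iff[OF hom] by blast
  have Q: "matmap \<pi>S Q = mat 1" using matmap_inverse_eq_mat_1[OF hom PQ(1,3)] .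
  have conj_mult: "(P ** A ** Q) ** (P ** B ** Q) = P ** (A ** B) ** Q" for A B
  proof -
    have "(P ** A ** Q) ** (P ** B ** Q) = P ** A ** (Q ** P) ** B ** Q"
      by (simp add: matrix_mul_assoc)
    then show ?thesis using PQ(2) by (simp add: matrix_mul_assoc)
  qed
  show ?thesis
    unfolding is_lift_def
  proof (intro conjI ballI allI)
    fix g :: "'r^'n^'n" assume g: "g \<in> SL"
    obtain B where B: "\<rho> g ** B = mat 1" "B ** \<rho> g = mat 1"
      using lift g unfolding is_lift_def is_GL_def by blast
    show "is_GL (\<rho>' g)"
      unfolding is_GL_def PQ(4)[rule_format, OF g]
      by (rule exI[of _ "P ** B ** Q"]) (simp add: conj_mult B PQ)
    show "matmap \<pi>S (\<rho>' g) = matmap \<pi>R g"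
      using lift g PQ(3) Q unfolding is_lift_def PQ(4)[rule_format, OF g]
      by (simp add: matmap_mult[OF hom])
    fix i
    obtain j where "\<forall>h\<in>SL. matcong \<pi>R j g h \<longrightarrow> matcong \<pi>S i (\<rho> g) (\<rho> h)"
      using lift g unfolding is_lift_def by blast
    then show "\<exists>j. \<forall>h\<in>SL. matcong \<pi>R j g h \<longrightarrow> matcong \<pi>S i (\<rho>' g) (\<rho>' h)"
      using PQ(4) g by (auto intro!: exI[of _ j] matcong_mult)
  next
    fix g h :: "'r^'n^'n" assume g: "g \<in> SL" and h: "h \<in> SL"
    then have "g ** h \<in> SL" by (rule SL_mult)
    then show "\<rho>' (g ** h) = \<rho>' g ** \<rho>' h"
      using lift g h PQ(4) unfolding is_lift_def by (simp add: conj_mult)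
  qed
qed

lemma is_lift_matmap:
  fixes \<pi>R :: "'r::comm_ring_1 \<Rightarrow> 'k::{field,finite}" and \<pi>S :: "'s::comm_ring_1 \<Rightarrow> 'k"
  assumes R: "local_ring \<pi>R" and f: "f \<in> homC \<pi>R \<pi>S"
  shows "is_lift \<pi>R \<pi>S (\<lambda>g::'r^'n^'n. matmap f g)"
  unfolding is_lift_def
proof (intro conjI ballI allI)
  have hom: "is_ring_hom f" and local: "\<And>x. x \<in> maxid \<pi>R \<Longrightarrow> f x \<in> maxid \<pi>S"
    and reduce: "\<And>x. \<pi>S (f x) = \<pi>R x"
    using f unfolding homC_def by auto
  fix g :: "'r^'n^'n" assume "g \<in> SL"
  then obtain B where "g ** B = mat 1" "B ** g = mat 1"
    using elementary_invertible local_ring.SL_eq_elementary[OF R] by blast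
  then show "is_GL (matmap f g)"
    unfolding is_GL_def
    by (intro exI[of _ "matmap f B"]) (simp add: matmap_mult[OF hom, symmetric] matmap_mat_1[OF hom])
  show "matmap \<pi>S (matmap f g) = matmap \<pi>R g"
    by (simp add: vec_eq_iff reduce)
  show "\<exists>j. \<forall>h\<in>SL. matcong \<pi>R j g h \<longrightarrow> matcong \<pi>S i (matmap f g) (matmap f h)" for i
    using matcong_matmap[OF hom local] by blast
next
  show "matmap f (g ** h) = matmap f g ** matmap f h" for g h :: "'r^'n^'n"
    using f by (simp add: homC_def matmap_mult)
qed

lemma strict_equiv_matmap_imp_eq:
  fixes f g :: "'r::comm_ring_1 \<Rightarrow> 's::comm_ring_1" and a b :: "'n::finite"
  assumes hom: "is_ring_hom \<pi>S" and hom_fg: "is_ring_hom f" "is_ring_hom g" and "a \<noteq> b"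
    and "strict_equiv \<pi>S (\<lambda>h::'r^'n^'n. matmap f h) (\<lambda>h. matmap g h)"
  shows "f = g"
proof
  obtain P Q :: "'s^'n^'n" where PQ: "P ** Q = mat 1" "\<forall>h\<in>SL. matmap g h = P ** matmap f h ** Q"
    using assms strict_equiv_iff[OF hom] by blast
  have conj: "g r = P $ a $ a * f r * Q $ b $ b" for r
  proof -
    have "elt (g r) a b = P ** elt (f r) a b ** Q"
      using PQ(2)[rule_format, OF elt_in_SL[OF \<open>a \<noteq> b\<close>, of r]] by (simp add: matmap_elt hom_fg)
    then have "elt (g r) a b $ a $ b = (P ** elt (f r) a b ** Q) $ a $ b" by simp
    then show ?thesis
      using \<open>a \<noteq> b\<close> PQ(1) by (simp add: mult_elt_mult_nth elt_nth mat_def)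
  qed
  have "P $ a $ a * Q $ b $ b = 1"
    using conj[of 1] hom_fg by (simp add: is_ring_hom_one)
  then show "f r = g r" for r
    using conj[of r] by (simp add: algebra_simps)
qed

lemma Def_classE:
  assumes "\<xi> \<in> Def \<pi>R \<pi>S"
  obtains \<rho>\<^sub>0 where "is_lift \<pi>R \<pi>S \<rho>\<^sub>0" "\<xi> = {\<rho>. strict_equiv \<pi>S \<rho>\<^sub>0 \<rho>}"
proof -
  from assms obtain \<rho>\<^sub>0 where "is_lift \<pi>R \<pi>S \<rho>\<^sub>0" "\<xi> = {(\<rho>, \<rho>'). strict_equiv \<pi>S \<rho> \<rho>'} `` {\<rho>\<^sub>0}"
    unfolding Def_def by (auto elim!: quotientE)
  then show ?thesis by (intro that) auto
qed

section \<open>Lifts sending elementary matrices to elementary matrices\<close>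

locale elementary_lift = R: local_ring \<pi>R + S: local_ring \<pi>S
  for \<pi>R :: "'r::comm_ring_1 \<Rightarrow> 'k::field" and \<pi>S :: "'s::comm_ring_1 \<Rightarrow> 'k" +
  fixes \<rho> :: "'r^'n::finite^'n \<Rightarrow> 's^'n^'n"
  assumes mult: "g \<in> SL \<Longrightarrow> h \<in> SL \<Longrightarrow> \<rho> (g ** h) = \<rho> g ** \<rho> h"
    and reduce: "g \<in> SL \<Longrightarrow> matmap \<pi>S (\<rho> g) = matmap \<pi>R g"
    and elt_to_elt: "a \<noteq> b \<Longrightarrow> \<exists>c. \<rho> (elt r a b) = elt c a b"
begin

definition coef :: "'n \<Rightarrow> 'n \<Rightarrow> 'r \<Rightarrow> 's" where
  "coef a b r = \<rho> (elt r a b) $ a $ b"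

abbreviation \<epsilon> :: "'n \<Rightarrow> 'n \<Rightarrow> 's" where
  "\<epsilon> a b \<equiv> coef a b 1"

lemma rho_elt: "a \<noteq> b \<Longrightarrow> \<rho> (elt r a b) = elt (coef a b r) a b"
  using elt_to_elt[of a b r] by (auto simp: coef_def elt_nth)

lemma coef_add:
  assumes "a \<noteq> b" shows "coef a b (r + s) = coef a b r + coef a b s"
proof -
  have "elt (coef a b (r + s)) a b = \<rho> (elt r a b ** elt s a b)"
    using assms by (simp add: rho_elt elt_mult_elt)
  also have "\<dots> = elt (coef a b r + coef a b s) a b"
    by (simp only: mult[OF elt_in_SL[OF assms] elt_in_SL[OF assms]] rho_elt[OF assms])
      (rule elt_mult_elt[OF assms])
  finally show ?thesis
    using elt_eq_elt_iff[OF assms] by blast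
qed

lemma coef_zero: "a \<noteq> b \<Longrightarrow> coef a b 0 = 0"
  using coef_add[of a b 0 0] by simp

lemma coef_uminus: "a \<noteq> b \<Longrightarrow> coef a b (- r) = - coef a b r"
  using coef_add[of a b r "- r"] coef_zero[of a b] minus_unique[of "coef a b r" "coef a b (- r)"]
  by simp

lemma reduce_coef: "a \<noteq> b \<Longrightarrow> \<pi>S (coef a b r) = \<pi>R r"
  using reduce[OF elt_in_SL, of a b r] by (simp add: rho_elt matmap_elt R.hom S.hom elt_eq_elt_iff)

lemma rho_wmat: "a \<noteq> b \<Longrightarrow> \<rho> (wmat u u' a b) = wmat (coef a b u) (coef b a u') a b"
  unfolding wmat_def by (simp add: mult SL_mult elt_in_SL rho_elt coef_uminus)

text \<open>The image \<open>wmat (coef a b u) (coef b a u') a b\<close> of a monomial matrix conjugates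
  \<open>t\<^sub>b\<^sub>a\<close> into \<open>t\<^sub>a\<^sub>b\<close>, which forces its \<open>(b, b)\<close> entry \<open>1 - coef b a u' * coef a b u\<close> to vanish.\<close>

lemma coef_inverse:
  assumes ab: "a \<noteq> b" and u: "u * u' = 1"
  shows "coef a b u * coef b a u' = 1"
proof -
  define W where "W = \<rho> (wmat u u' a b)"
  have "W ** elt (\<epsilon> b a) b a = elt (coef a b (- (u * u))) a b ** W"
    using arg_cong[OF wmat_conj_elt_transpose[OF ab u], of \<rho>] ab
    by (simp add: W_def mult wmat_in_elementary elementary_in_SL elt_in_SL rho_elt)
  then have "(W ** elt (\<epsilon> b a) b a) $ b $ a = (elt (coef a b (- (u * u))) a b ** W) $ b $ a"
    by simp
  then have "W $ b $ b * \<epsilon> b a = 0"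
    using ab by (simp add: mult_elt_nth elt_mult_nth)
  moreover obtain y where "\<epsilon> b a * y = 1"
    using S.unit[of "\<epsilon> b a"] reduce_coef[of b a 1] ab by (auto simp: is_ring_hom_one[OF R.hom])
  ultimately have "W $ b $ b = 0"
    by (metis mult.assoc mult_1_right mult_zero_left)
  moreover have "W $ b $ b = 1 - coef b a u' * coef a b u"
    using ab unfolding W_def rho_wmat[OF ab] by (simp add: wmat_def mult_elt_nth elt_nth)
  ultimately show ?thesis
    by (simp add: mult.commute)
qed

lemma eps_inverse: "a \<noteq> b \<Longrightarrow> \<epsilon> a b * \<epsilon> b a = 1"
  using coef_inverse[of a b 1 1] by simp

lemma rho_hmat:
  assumes ab: "a \<noteq> b" and u: "u * u' = 1"
  shows "\<rho> (hmat u u' a b) = hmat (coef a b u * \<epsilon> b a) (coef b a u' * \<epsilon> a b) a b"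
proof -
  have "\<rho> (hmat u u' a b) = \<rho> (wmat u u' a b ** wmat (- 1) (- 1) a b)"
    using wmat_mult_wmat[OF ab u, of 1 1] by simp
  also have "\<dots> = wmat (coef a b u) (coef b a u') a b ** wmat (- \<epsilon> a b) (- \<epsilon> b a) a b"
    using ab by (simp add: mult wmat_in_elementary elementary_in_SL rho_wmat coef_uminus)
  also have "\<dots> = hmat (coef a b u * \<epsilon> b a) (coef b a u' * \<epsilon> a b) a b"
    by (rule wmat_mult_wmat[OF ab coef_inverse[OF ab u] eps_inverse[OF ab]])
  finally show ?thesis .
qed

lemma coef_left_index:
  assumes ab: "a \<noteq> b" and "k \<noteq> a" "k \<noteq> b"
  shows "coef a k r = \<epsilon> a b * coef b k r"
proof -
  have "wmat (\<epsilon> a b) (\<epsilon> b a) a b ** elt (coef b k r) b k = elt (coef a k r) a k ** wmat (\<epsilon> a b) (\<epsilon> b a) a b"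
    using arg_cong[OF wmat_conj_elt_left[OF assms, of r], of \<rho>] assms
    by (simp add: mult wmat_in_elementary elementary_in_SL elt_in_SL rho_wmat rho_elt)
  then have "(wmat (\<epsilon> a b) (\<epsilon> b a) a b ** elt (coef b k r) b k) $ a $ k
      = (elt (coef a k r) a k ** wmat (\<epsilon> a b) (\<epsilon> b a) a b) $ a $ k"
    by simp
  then show ?thesis
    using assms eps_inverse[OF ab] by (simp add: mult_elt_nth elt_mult_nth wmat_nth)
qed

lemma coef_right_index:
  assumes ab: "a \<noteq> b" and "k \<noteq> a" "k \<noteq> b"
  shows "coef k a r = \<epsilon> b a * coef k b r"
proof -
  have "wmat (\<epsilon> a b) (\<epsilon> b a) a b ** elt (coef k a r) k a = elt (coef k b (- r)) k b ** wmat (\<epsilon> a b) (\<epsilon> b a) a b"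
    using arg_cong[OF wmat_conj_elt_right[OF assms, of r], of \<rho>] assms
    by (simp add: mult wmat_in_elementary elementary_in_SL elt_in_SL rho_wmat rho_elt)
  then have "(wmat (\<epsilon> a b) (\<epsilon> b a) a b ** elt (coef k a r) k a) $ k $ a
      = (elt (coef k b (- r)) k b ** wmat (\<epsilon> a b) (\<epsilon> b a) a b) $ k $ a"
    by simp
  then show ?thesis
    using assms eps_inverse[OF ab] by (simp add: mult_elt_nth elt_mult_nth wmat_nth coef_uminus mult.commute)
qed

text \<open>The factor \<open>\<epsilon> b a\<close> normalises \<open>phi a b 1 = 1\<close>.\<close>

definition phi :: "'n \<Rightarrow> 'n \<Rightarrow> 'r \<Rightarrow> 's" where
  "phi a b r = coef a b r * \<epsilon> b a"

lemma phi_add: "a \<noteq> b \<Longrightarrow> phi a b (r + s) = phi a b r + phi a b s"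
  unfolding phi_def by (simp add: coef_add distrib_right)

lemma phi_one: "a \<noteq> b \<Longrightarrow> phi a b 1 = 1"
  unfolding phi_def by (rule eps_inverse)

lemma reduce_phi: "a \<noteq> b \<Longrightarrow> \<pi>S (phi a b r) = \<pi>R r"
  unfolding phi_def using reduce_coef[of a b r] reduce_coef[of b a 1]
  by (simp add: is_ring_hom_mult[OF S.hom] is_ring_hom_one[OF R.hom])

lemma phi_mult_units:
  assumes ab: "a \<noteq> b" and u: "u * u' = 1" and v: "v * v' = 1"
  shows "phi a b (u * v) = phi a b u * phi a b v"
proof -
  have uv: "(u * v) * (u' * v') = 1" using u v by (simp add: algebra_simps)
  have "hmat (phi a b u) (coef b a u' * \<epsilon> a b) a b ** hmat (phi a b v) (coef b a v' * \<epsilon> a b) a b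
      = hmat (phi a b (u * v)) (coef b a (u' * v') * \<epsilon> a b) a b"
    using arg_cong[OF hmat_mult_hmat[of u u' a b v v'], of \<rho>] ab u v uv
    by (simp add: mult hmat_in_elementary elementary_in_SL rho_hmat phi_def)
  then have "hmat (phi a b u * phi a b v) (coef b a u' * \<epsilon> a b * (coef b a v' * \<epsilon> a b)) a b $ a $ a
      = hmat (phi a b (u * v)) (coef b a (u' * v') * \<epsilon> a b) a b $ a $ a"
    by (simp add: hmat_mult_hmat)
  then show ?thesis
    by (simp add: hmat_def diag_mat_nth)
qed

lemma phi_mult:
  assumes ab: "a \<noteq> b"
  shows "phi a b (x * y) = phi a b x * phi a b y"
proof -
  have unit_right: "phi a b (z * u) = phi a b z * phi a b u" if u: "u * u' = 1" for z u u'
    by (rule R.additive_eq_if_eq_on_units[of "\<lambda>z. phi a b (z * u)" "\<lambda>z. phi a b z * phi a b u"])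
      (use phi_add[OF ab] phi_mult_units[OF ab _ u] in \<open>auto simp: distrib_right\<close>)
  show ?thesis
    by (rule R.additive_eq_if_eq_on_units[of "\<lambda>y. phi a b (x * y)" "\<lambda>y. phi a b x * phi a b y"])
      (use phi_add[OF ab] unit_right in \<open>auto simp: distrib_left\<close>)
qed

lemma is_ring_hom_phi: "a \<noteq> b \<Longrightarrow> is_ring_hom (phi a b)"
  unfolding is_ring_hom_def using phi_one phi_add phi_mult by blast

lemma phi_left_index:
  assumes ab: "a \<noteq> b" and ka: "k \<noteq> a" and kb: "k \<noteq> b"
  shows "phi a k r = phi b k r"
proof -
  have "phi a k r = coef b k r * (\<epsilon> k a * \<epsilon> a b)"
    unfolding phi_def using coef_left_index[OF ab ka kb] by (simp add: algebra_simps)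
  also have "\<epsilon> k a * \<epsilon> a b = \<epsilon> k b"
    using coef_left_index[of k a b 1] ab ka kb by simp
  finally show ?thesis unfolding phi_def .
qed

lemma phi_right_index:
  assumes ab: "a \<noteq> b" and ka: "k \<noteq> a" and kb: "k \<noteq> b"
  shows "phi k a r = phi k b r"
proof -
  have "phi k a r = coef k b r * (\<epsilon> b a * \<epsilon> a k)"
    unfolding phi_def using coef_right_index[OF ab ka kb] by (simp add: algebra_simps)
  also have "\<epsilon> b a * \<epsilon> a k = \<epsilon> b k"
    using coef_left_index[of b a k 1] ab ka kb by simp
  finally show ?thesis unfolding phi_def .
qed

lemma phi_swap:
  assumes ab: "a \<noteq> b"
  shows "phi a b r = phi b a r"
proof (rule R.additive_eq_if_eq_on_units)
  show "phi a b (x + y) = phi a b x + phi a b y" "phi b a (x + y) = phi b a x + phi b a y" for x y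
    using ab by (simp_all add: phi_add)
  fix u u' :: 'r assume u: "u * u' = 1"
  have "phi a b u * phi b a u' = (coef a b u * coef b a u') * (\<epsilon> b a * \<epsilon> a b)"
    unfolding phi_def by (simp add: algebra_simps)
  then have inv: "phi a b u * phi b a u' = 1"
    using coef_inverse[OF ab u] eps_inverse[OF ab[symmetric]] by simp
  have "phi b a u' * phi b a u = 1"
    using phi_mult_units[OF ab[symmetric], of u' u u u'] phi_one[OF ab[symmetric]] u
    by (simp add: mult.commute)
  then have "phi a b u = (phi a b u * phi b a u') * phi b a u"
    by (simp add: mult.assoc)
  then show "phi a b u = phi b a u"
    using inv by simp
qed

lemma phi_indep:
  assumes ab: "a \<noteq> b" and ab': "a' \<noteq> b'"
  shows "phi a b r = phi a' b' r"
proof (cases "a' = b")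
  case False
  have "phi a b r = phi a' b r"
    using phi_left_index[of a a' b r] False ab by (cases "a = a'") auto
  also have "\<dots> = phi a' b' r"
    using phi_right_index[of b b' a' r] False ab' by (cases "b = b'") auto
  finally show ?thesis .
next
  case True
  show ?thesis
  proof (cases "b' = a")
    case True
    then show ?thesis using phi_swap[OF ab] \<open>a' = b\<close> by simp
  next
    case False
    have "phi a b r = phi a b' r"
      using phi_right_index[of b b' a r] False ab ab' True by (cases "b = b'") auto
    also have "\<dots> = phi a' b' r"
      using phi_left_index[of a a' b' r] False ab ab' True by auto
    finally show ?thesis .
  qed
qed

text \<open>\<open>\<epsilon>\<close> is a coboundary, \<open>\<epsilon> a b = dvec c a * dvec' c b\<close>, so conjugation by
  \<open>diag_mat (dvec c)\<close>, which is congruent to \<open>1\<close> modulo the maximal ideal, turns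
  \<open>matmap (phi c d)\<close> into \<open>\<rho>\<close>.\<close>

definition dvec :: "'n \<Rightarrow> 'n \<Rightarrow> 's" where
  "dvec c x = (if x = c then 1 else \<epsilon> x c)"

definition dvec' :: "'n \<Rightarrow> 'n \<Rightarrow> 's" where
  "dvec' c x = (if x = c then 1 else \<epsilon> c x)"

lemma dvec_mult_dvec': "dvec c x * dvec' c x = 1"
  unfolding dvec_def dvec'_def using eps_inverse[of x c] by auto

lemma eps_eq_dvec_mult_dvec': "a \<noteq> b \<Longrightarrow> \<epsilon> a b = dvec c a * dvec' c b"
  using coef_left_index[of a c b 1] by (auto simp: dvec_def dvec'_def)

lemma reduce_diag_mat_dvec: "matmap \<pi>S (diag_mat (dvec c)) = mat 1"
  using reduce_coef[of _ c 1]
  by (auto simp: vec_eq_iff diag_mat_def mat_def dvec_def is_ring_hom_zero[OF S.hom]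
      is_ring_hom_one[OF S.hom] is_ring_hom_one[OF R.hom])

lemma coef_eq_eps_mult_phi:
  assumes "a \<noteq> b" "c \<noteq> d" shows "coef a b r = \<epsilon> a b * phi c d r"
proof -
  have "\<epsilon> a b * phi c d r = coef a b r * (\<epsilon> a b * \<epsilon> b a)"
    using phi_indep[OF assms(2,1), of r] by (simp add: phi_def algebra_simps)
  then show ?thesis
    using eps_inverse[OF assms(1)] by simp
qed

lemma rho_elt_eq_conj:
  assumes "a \<noteq> b" "c \<noteq> d"
  shows "\<rho> (elt r a b) = diag_mat (dvec c) ** matmap (phi c d) (elt r a b) ** diag_mat (dvec' c)"
proof -
  have "elt (coef a b r) a b $ x $ y = dvec c x * elt (phi c d r) a b $ x $ y * dvec' c y" for x y
    using assms dvec_mult_dvec'[of c x] coef_eq_eps_mult_phi[OF assms, of r]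
      eps_eq_dvec_mult_dvec'[OF assms(1), of c]
    by (auto simp: elt_nth algebra_simps)
  then show ?thesis
    using assms is_ring_hom_phi[OF assms(2)]
    by (simp add: rho_elt matmap_elt vec_eq_iff diag_mat_mult_nth mult_diag_mat_nth)
qed

lemma rho_elementary_eq_conj:
  assumes cd: "c \<noteq> d"
  shows "A \<in> elementary \<Longrightarrow> \<rho> A = diag_mat (dvec c) ** matmap (phi c d) A ** diag_mat (dvec' c)"
proof (induction A rule: elementary.induct)
  case mat_1
  have "\<rho> (mat 1) = mat 1"
    using rho_elt[OF cd, of 0] coef_zero[OF cd] by (simp add: elt_zero)
  then show ?case
    using diag_mat_mult_inverse[of "dvec c" "dvec' c", OF dvec_mult_dvec'] by (simp add: matmap_mat_1[OF is_ring_hom_phi[OF cd]])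
next
  case (elt_mult a b A r)
  let ?P = "diag_mat (dvec c)" and ?Q = "diag_mat (dvec' c)" and ?f = "phi c d"
  have "\<rho> (elt r a b ** A) = (?P ** matmap ?f (elt r a b) ** ?Q) ** (?P ** matmap ?f A ** ?Q)"
    using elt_mult rho_elt_eq_conj[OF elt_mult(1) cd] by (simp add: mult elt_in_SL elementary_in_SL)
  also have "\<dots> = ?P ** matmap ?f (elt r a b) ** (?Q ** ?P) ** matmap ?f A ** ?Q"
    by (simp add: matrix_mul_assoc)
  also have "\<dots> = ?P ** matmap ?f (elt r a b ** A) ** ?Q"
    using diag_mat_mult_inverse[of "dvec' c" "dvec c"] dvec_mult_dvec'[of c]
    by (simp add: mult.commute matmap_mult[OF is_ring_hom_phi[OF cd]] matrix_mul_assoc)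
  finally show ?case .
qed

lemma strict_equiv_matmap_phi:
  assumes "c \<noteq> d" shows "strict_equiv \<pi>S (\<lambda>g. matmap (phi c d) g) \<rho>"
  unfolding strict_equiv_iff[OF S.hom]
  using diag_mat_mult_inverse[of "dvec c" "dvec' c"] diag_mat_mult_inverse[of "dvec' c" "dvec c"]
    dvec_mult_dvec'[of c] reduce_diag_mat_dvec rho_elementary_eq_conj[OF assms] R.SL_eq_elementary
  by (metis mult.commute)

end

section \<open>The map \<open>\<iota>\<^sub>*(S)\<close>\<close>

lemma phi_in_homC:
  fixes \<pi>R :: "'r::comm_ring_1 \<Rightarrow> 'k::{field,finite}" and \<pi>S :: "'s::comm_ring_1 \<Rightarrow> 'k"
  assumes "elementary_lift \<pi>R \<pi>S \<rho>" and "a \<noteq> b"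
  shows "elementary_lift.phi \<rho> a b \<in> homC \<pi>R \<pi>S"
  using elementary_lift.is_ring_hom_phi[OF assms] elementary_lift.reduce_phi[OF assms]
  by (simp add: homC_def maxid_def)

lemma matmap_in_iota_star:
  fixes \<pi>R :: "'r::comm_ring_1 \<Rightarrow> 'k::{field,finite}" and \<pi>S :: "'s::comm_ring_1 \<Rightarrow> 'k"
  assumes "local_ring \<pi>R" and "is_ring_hom \<pi>S" and "f \<in> homC \<pi>R \<pi>S"
  shows "(\<lambda>g::'r^'n^'n. matmap f g) \<in> iota_star \<pi>R \<pi>S f"
  unfolding iota_star_def using is_lift_matmap[OF assms(1,3)] strict_equiv_refl[OF assms(2)] by blast

lemma inj_on_iota_star:
  fixes \<pi>R :: "'r::comm_ring_1 \<Rightarrow> 'k::{field,finite}" and \<pi>S :: "'s::comm_ring_1 \<Rightarrow> 'k"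
  assumes R: "local_ring \<pi>R" and S: "is_ring_hom \<pi>S" and ab: "(a::'n::finite) \<noteq> b"
  shows "inj_on (iota_star \<pi>R \<pi>S :: ('r \<Rightarrow> 's) \<Rightarrow> ('r^'n^'n \<Rightarrow> 's^'n^'n) set) (homC \<pi>R \<pi>S)"
proof (rule inj_onI)
  fix f g
  assume f: "f \<in> homC \<pi>R \<pi>S" and g: "g \<in> homC \<pi>R \<pi>S"
    and eq: "(iota_star \<pi>R \<pi>S f :: ('r^'n^'n \<Rightarrow> 's^'n^'n) set) = iota_star \<pi>R \<pi>S g"
  have "(\<lambda>h::'r^'n^'n. matmap g h) \<in> iota_star \<pi>R \<pi>S f"
    using matmap_in_iota_star[OF R S g] eq by simp
  then have "strict_equiv \<pi>S (\<lambda>h::'r^'n^'n. matmap f h) (\<lambda>h. matmap g h)"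
    by (simp add: iota_star_def)
  moreover have "is_ring_hom f" "is_ring_hom g"
    using f g by (simp_all add: homC_def)
  ultimately show "f = g"
    using strict_equiv_matmap_imp_eq[OF S _ _ ab] by blast
qed

lemma Def_class_eq_iota_star:
  assumes S: "is_ring_hom \<pi>S" and "\<xi> \<in> Def \<pi>R \<pi>S" and "\<rho> \<in> \<xi>"
    and f: "strict_equiv \<pi>S (\<lambda>g. matmap f g) \<rho>"
  shows "\<xi> = iota_star \<pi>R \<pi>S f"
proof -
  obtain \<rho>\<^sub>0 where lift: "is_lift \<pi>R \<pi>S \<rho>\<^sub>0" and \<xi>: "\<xi> = {\<rho>. strict_equiv \<pi>S \<rho>\<^sub>0 \<rho>}"
    using assms(2) by (rule Def_classE)
  have \<rho>: "strict_equiv \<pi>S \<rho>\<^sub>0 \<rho>"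
    using \<open>\<rho> \<in> \<xi>\<close> \<xi> by simp
  have "strict_equiv \<pi>S \<rho>\<^sub>0 \<rho>' \<longleftrightarrow> strict_equiv \<pi>S (\<lambda>g. matmap f g) \<rho>'" for \<rho>'
  proof
    assume "strict_equiv \<pi>S \<rho>\<^sub>0 \<rho>'"
    then show "strict_equiv \<pi>S (\<lambda>g. matmap f g) \<rho>'"
      by (rule strict_equiv_trans[OF S f strict_equiv_trans[OF S strict_equiv_sym[OF S \<rho>]]])
  next
    assume "strict_equiv \<pi>S (\<lambda>g. matmap f g) \<rho>'"
    then show "strict_equiv \<pi>S \<rho>\<^sub>0 \<rho>'"
      by (rule strict_equiv_trans[OF S \<rho> strict_equiv_trans[OF S strict_equiv_sym[OF S f]]])
  qed
  then show ?thesis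
    using is_lift_strict_equiv[OF S lift] unfolding \<xi> iota_star_def by blast
qed

lemma elementary_images_if_in_image_iota_star:
  fixes \<pi>R :: "'r::comm_ring_1 \<Rightarrow> 'k::{field,finite}" and \<pi>S :: "'s::comm_ring_1 \<Rightarrow> 'k"
  assumes "local_ring \<pi>R" and "is_ring_hom \<pi>S"
    and "\<xi> \<in> (iota_star \<pi>R \<pi>S ` homC \<pi>R \<pi>S :: ('r^'n^'n \<Rightarrow> 's^'n^'n) set set)"
  shows "\<exists>\<rho>\<in>\<xi>. \<forall>a b. a \<noteq> b \<longrightarrow> (\<forall>r. \<exists>c. \<rho> (elt r a b) = elt c a b)"
proof -
  obtain f where f: "f \<in> homC \<pi>R \<pi>S" and "\<xi> = iota_star \<pi>R \<pi>S f"
    using assms(3) by blast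
  then have "(\<lambda>g. matmap f g) \<in> \<xi>"
    using matmap_in_iota_star[OF assms(1,2) f] by simp
  moreover have "is_ring_hom f"
    using f by (simp add: homC_def)
  ultimately show ?thesis
    by (auto simp: matmap_elt intro!: bexI[of _ "\<lambda>g. matmap f g"])
qed

lemma in_image_iota_star_if_elementary_images:
  fixes \<pi>R :: "'r::comm_ring_1 \<Rightarrow> 'k::{field,finite}" and \<pi>S :: "'s::comm_ring_1 \<Rightarrow> 'k"
  assumes R: "local_ring \<pi>R" and S: "local_ring \<pi>S" and ab: "(a::'n::finite) \<noteq> b"
    and \<xi>: "\<xi> \<in> (Def \<pi>R \<pi>S :: ('r^'n^'n \<Rightarrow> 's^'n^'n) set set)"
    and images: "\<exists>\<rho>\<in>\<xi>. \<forall>a b. a \<noteq> b \<longrightarrow> (\<forall>r. \<exists>c. \<rho> (elt r a b) = elt c a b)"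
  shows "\<xi> \<in> iota_star \<pi>R \<pi>S ` homC \<pi>R \<pi>S"
proof -
  obtain \<rho> where "\<rho> \<in> \<xi>" and elt: "\<And>a b r. a \<noteq> b \<Longrightarrow> \<exists>c. \<rho> (elt r a b) = elt c a b"
    using images by blast
  have hS: "is_ring_hom \<pi>S" using S by (rule local_ring.hom)
  obtain \<rho>\<^sub>0 where "is_lift \<pi>R \<pi>S \<rho>\<^sub>0" "\<xi> = {\<rho>. strict_equiv \<pi>S \<rho>\<^sub>0 \<rho>}"
    using \<xi> by (rule Def_classE)
  then have "is_lift \<pi>R \<pi>S \<rho>"
    using \<open>\<rho> \<in> \<xi>\<close> is_lift_strict_equiv[OF hS] by blast
  then have lift: "elementary_lift \<pi>R \<pi>S \<rho>"
    using R S elt by (simp add: elementary_lift_def elementary_lift_axioms_def is_lift_def)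
  have "\<xi> = iota_star \<pi>R \<pi>S (elementary_lift.phi \<rho> a b)"
    using hS \<xi> \<open>\<rho> \<in> \<xi>\<close> elementary_lift.strict_equiv_matmap_phi[OF lift ab]
    by (rule Def_class_eq_iota_star)
  then show ?thesis
    using phi_in_homC[OF lift ab] by blast
qed

theorem mainTheorem11:
  fixes \<pi>R :: "'r::comm_ring_1 \<Rightarrow> 'k::{field,finite}"
    and \<pi>S :: "'s::comm_ring_1 \<Rightarrow> 'k"
  assumes "cobj \<pi>R" and "cobj \<pi>S" and "CARD('n::finite) \<ge> 2"
  shows "inj_on (iota_star \<pi>R \<pi>S :: ('r \<Rightarrow> 's) \<Rightarrow> ('r^'n^'n \<Rightarrow> 's^'n^'n) set) (homC \<pi>R \<pi>S)
     \<and> (\<forall>\<xi> \<in> (Def \<pi>R \<pi>S :: ('r^'n^'n \<Rightarrow> 's^'n^'n) set set).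
          \<xi> \<in> iota_star \<pi>R \<pi>S ` homC \<pi>R \<pi>S \<longleftrightarrow>
          (\<exists>\<rho>\<in>\<xi>. \<forall>a b. a \<noteq> b \<longrightarrow> (\<forall>r. \<exists>c. \<rho> (elt r a b) = elt c a b)))"
proof -
  have R: "local_ring \<pi>R" and S: "local_ring \<pi>S"
    using assms(1,2) by (simp_all add: cobj_local_ring)
  have hS: "is_ring_hom \<pi>S"
    using S by (rule local_ring.hom)
  obtain a b :: 'n where ab: "a \<noteq> b"
  proof -
    have "\<not> (\<forall>x \<in> UNIV. \<forall>y \<in> UNIV. x = (y :: 'n))"
      using assms(3) card_le_Suc0_iff_eq[of "UNIV :: 'n set"] by simp
    then show thesis using that by blast
  qed
  have image_iff: "\<xi> \<in> iota_star \<pi>R \<pi>S ` homC \<pi>R \<pi>S \<longleftrightarrow>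
      (\<exists>\<rho>\<in>\<xi>. \<forall>a b. a \<noteq> b \<longrightarrow> (\<forall>r. \<exists>c. \<rho> (elt r a b) = elt c a b))"
    if "\<xi> \<in> (Def \<pi>R \<pi>S :: ('r^'n^'n \<Rightarrow> 's^'n^'n) set set)" for \<xi>
    using elementary_images_if_in_image_iota_star[OF R hS, of \<xi>]
      in_image_iota_star_if_elementary_images[OF R S ab that] by (rule iffI)
  show ?thesis
    using inj_on_iota_star[OF R hS ab] image_iff by (intro conjI ballI)
qed

end
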